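(* Let $f \in \mathrm{Inj}(\Omega)$ have at least one infinite cycle, and let $n \in \mathbb{Z}_+$. Then there is a transposition $h \in \mathrm{Fin}(\Omega)$ such that $(fh)\mathrm{C}_n = (f)\mathrm{C}_n + 1$ and $(fh)\mathrm{C}_m = (f)\mathrm{C}_m$ for all $m \in \mathbb{Z}_+ \setminus \{n\}$.
   Context: $\Omega$ is a countably infinite set; maps are written on the right and composed left to right. $\mathrm{Inj}(\Omega)$ is the monoid of injective maps $\Omega\to\Omega$; $\mathrm{Fin}(\Omega)$ the group of permutations moving only finitely many points. For $f\in\mathrm{Inj}(\Omega)$, a cycle of $f$ is a nonempty $\Sigma\subseteq\Omega$ such that (a) for all $\alpha\in\Omega$, $(\alpha)f\in\Sigma$ iff $\alpha\in\Sigma$, and (b) no proper nonempty subset of $\Sigma$ satisfies (a). For $n\in\mathbb{Z}_+$, $(f)\mathrm{C}_n$ is the cardinal number of cycles of $f$ of cardinality $n$ (cardinal arithmetic, so $\aleph_0+1=\aleph_0$). *)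

theory Defs
  imports Main "HOL-Library.Countable_Set" "HOL-Library.Extended_Nat"
    "HOL-Combinatorics.Transposition"
begin

text \<open>Omega is the universe of a type 'a (assumed countably infinite in the theorem).
  Maps are written on the right and composed left to right, so the product f h
  (first f, then h) is the HOL function h o f.\<close>

definition is_cycle :: "('a \<Rightarrow> 'a) \<Rightarrow> 'a set \<Rightarrow> bool" where
  "is_cycle f S \<longleftrightarrow>
     S \<noteq> {} \<and> (\<forall>x. f x \<in> S \<longleftrightarrow> x \<in> S) \<and>
     \<not> (\<exists>T. T \<noteq> {} \<and> T \<subset> S \<and> (\<forall>x. f x \<in> T \<longleftrightarrow> x \<in> T))"

text \<open>Number of cycles of f of cardinality n; as a cardinal it is at most aleph_0
  (the cycles are disjoint subsets of a countable set), so it is represented in enat,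
  with infinity standing for aleph_0 (and infinity + 1 = infinity).\<close>

definition cycle_count :: "('a \<Rightarrow> 'a) \<Rightarrow> nat \<Rightarrow> enat" where
  "cycle_count f n =
     (let X = {S. is_cycle f S \<and> finite S \<and> card S = n}
      in if finite X then enat (card X) else \<infinity>)"

end

theory Submission
  imports Defs
begin

(* Let S be an infinite cycle of the injective map f, pick x in S and
   put b = f^n(x).  Since S is infinite, the points x, f(x), f^2(x), ... are pairwise
   distinct.  Composing f with the transposition (x b) reroutes f^(n-1)(x) to x, so
   the new map g closes the finite set C = {x, ..., f^(n-1)(x)} into a cycle of length
   n, and the rest S - C remains a single infinite cycle of g; outside S nothing
   changes.  Hence the cycles of g are those of f other than S, together with C and
   S - C, which raises the number of n-cycles by one and leaves all other finite
   cycle counts unchanged. *)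

definition invariant :: "('a \<Rightarrow> 'a) \<Rightarrow> 'a set \<Rightarrow> bool" where
  "invariant f T \<longleftrightarrow> (\<forall>x. f x \<in> T \<longleftrightarrow> x \<in> T)"

lemma is_cycle_iff_minimal:
  "is_cycle f S \<longleftrightarrow> S \<noteq> {} \<and> invariant f S \<and>
     (\<forall>T. invariant f T \<longrightarrow> T \<subseteq> S \<longrightarrow> T \<noteq> {} \<longrightarrow> T = S)"
  unfolding is_cycle_def invariant_def by blast

lemma invariant_Int: "invariant f A \<Longrightarrow> invariant f B \<Longrightarrow> invariant f (A \<inter> B)"
  by (auto simp: invariant_def)

lemma invariant_Diff: "invariant f A \<Longrightarrow> invariant f B \<Longrightarrow> invariant f (A - B)"
  by (auto simp: invariant_def)

lemma cycle_minimal: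
  "is_cycle f S \<Longrightarrow> invariant f T \<Longrightarrow> T \<subseteq> S \<Longrightarrow> T \<noteq> {} \<Longrightarrow> T = S"
  by (simp add: is_cycle_iff_minimal)

lemma cycle_inside_or_disjoint:
  assumes "is_cycle f S" "invariant f T"
  shows "S \<subseteq> T \<or> S \<inter> T = {}"
  using cycle_minimal[OF assms(1) invariant_Int[of f S T]] assms
  by (auto simp: is_cycle_iff_minimal)

lemma cycles_overlap_eq:
  assumes "is_cycle f A" "is_cycle f B" "A \<inter> B \<noteq> {}"
  shows "A = B"
  using cycle_inside_or_disjoint[OF assms(1)] cycle_inside_or_disjoint[OF assms(2)] assms
  by (auto simp: is_cycle_iff_minimal)

lemma periodic_orbit_is_cycle:
  assumes inj: "inj g" and "0 < p" and period: "(g ^^ p) x = x"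
  shows "is_cycle g ((\<lambda>k. (g ^^ k) x) ` {..<p})"
proof -
  let ?orb = "\<lambda>k. (g ^^ k) x"
  have orb_mod: "?orb k = ?orb (k mod p)" for k
    using funpow_mod_eq[OF period] by simp
  have range_eq: "?orb ` {..<p} = range ?orb"
  proof
    show "range ?orb \<subseteq> ?orb ` {..<p}"
    proof
      fix y assume "y \<in> range ?orb"
      then obtain k where "y = ?orb (k mod p)" using orb_mod by blast
      then show "y \<in> ?orb ` {..<p}" using \<open>0 < p\<close> by simp
    qed
  qed blast
  have "invariant g (range ?orb)"
    unfolding invariant_def
  proof (intro allI iffI)
    fix y assume "g y \<in> range ?orb"
    then obtain k where "g y = ?orb k" by blast
    also have "\<dots> = ?orb (Suc (k + p - 1))"
      using orb_mod[of k] orb_mod[of "k + p"] \<open>0 < p\<close> by simp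
    also have "\<dots> = g (?orb (k + p - 1))"
      by simp
    finally show "y \<in> range ?orb"
      using inj by (auto dest: injD)
  qed (auto intro: range_eqI[of _ _ "Suc _"])
  moreover have "T = range ?orb"
    if T: "invariant g T" "T \<subseteq> range ?orb" "T \<noteq> {}" for T
  proof -
    obtain i where i: "?orb i \<in> T" using T(2,3) by blast
    have forward: "?orb (i + k) \<in> T" for k
      by (induction k) (use i T(1) in \<open>auto simp: invariant_def\<close>)
    have "?orb j \<in> T" for j
    proof -
      have "i + (j + (p - 1) * i) = j + i * p"
        using \<open>0 < p\<close> by (cases p) (simp_all add: algebra_simps)
      then have "(i + (j + (p - 1) * i)) mod p = j mod p"
        by (metis mod_mult_self1)
      then have "?orb (i + (j + (p - 1) * i)) = ?orb j"
        using orb_mod by metis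
      then show ?thesis using forward by metis
    qed
    then show ?thesis using T(2) by blast
  qed
  ultimately show ?thesis
    unfolding range_eq is_cycle_iff_minimal by blast
qed

text \<open>In an infinite cycle of an injective map no point is periodic, so every orbit
  enumerates distinct points.\<close>

lemma infinite_cycle_orbit_inj:
  assumes inj: "inj f" and S: "is_cycle f S" "infinite S" and "x \<in> S"
  shows "inj (\<lambda>k. (f ^^ k) x)"
proof (rule linorder_injI)
  fix i j :: nat
  assume "i < j"
  show "(f ^^ i) x \<noteq> (f ^^ j) x"
  proof
    assume "(f ^^ i) x = (f ^^ j) x"
    then have "(f ^^ i) ((f ^^ (j - i)) x) = (f ^^ i) x"
      using \<open>i < j\<close> by (simp flip: funpow_add[THEN fun_cong, simplified])
    then have period: "(f ^^ (j - i)) x = x"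
      using inj_fn[OF inj, of i] by (auto dest: injD)
    let ?P = "(\<lambda>k. (f ^^ k) x) ` {..<j - i}"
    have "is_cycle f ?P"
      using periodic_orbit_is_cycle[OF inj _ period] \<open>i < j\<close> by simp
    moreover have "x \<in> ?P"
      using \<open>i < j\<close> by (auto intro: image_eqI[of _ _ 0])
    ultimately have "?P = S"
      using cycles_overlap_eq[OF _ S(1)] \<open>x \<in> S\<close> by blast
    then show False using S(2) by auto
  qed
qed

lemma invariant_transpose_comp:
  "invariant f S \<Longrightarrow> a \<in> S \<Longrightarrow> b \<in> S \<Longrightarrow> invariant (transpose a b \<circ> f) S"
  by (auto simp: invariant_def transpose_def)

lemma transpose_comp_outside:
  "invariant f S \<Longrightarrow> a \<in> S \<Longrightarrow> b \<in> S \<Longrightarrow> y \<notin> S \<Longrightarrow> (transpose a b \<circ> f) y = f y"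
  by (auto simp: invariant_def transpose_def)

lemma invariant_transpose_comp_avoiding:
  assumes "invariant (transpose a b \<circ> f) U" "a \<notin> U" "b \<notin> U"
  shows "invariant f U"
  using assms unfolding invariant_def
  by (metis comp_apply transpose_apply_other transpose_apply_first transpose_apply_second)

lemma cycles_agree_outside:
  assumes "invariant f S" "invariant g S" "\<And>y. y \<notin> S \<Longrightarrow> g y = f y"
    and "T \<inter> S = {}"
  shows "is_cycle g T \<longleftrightarrow> is_cycle f T"
proof -
  have same_invariant: "invariant g U \<longleftrightarrow> invariant f U" if "U \<inter> S = {}" for U
    using assms(1-3) that unfolding invariant_def by (metis disjoint_iff)
  show ?thesis
    unfolding is_cycle_iff_minimal
    using same_invariant assms(4) by (metis disjoint_iff subset_iff)
qed

lemma cycles_after_split: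
  assumes S: "is_cycle f S" and gS: "invariant g S"
    and outside: "\<And>y. y \<notin> S \<Longrightarrow> g y = f y"
    and C: "is_cycle g C" "C \<subseteq> S" and rest: "is_cycle g (S - C)"
  shows "is_cycle g T \<longleftrightarrow> (is_cycle f T \<and> T \<noteq> S) \<or> T = C \<or> T = S - C"
proof -
  have fS: "invariant f S" using S by (simp add: is_cycle_iff_minimal)
  note agree = cycles_agree_outside[OF fS gS outside]
  show ?thesis
  proof
    assume T: "is_cycle g T"
    show "(is_cycle f T \<and> T \<noteq> S) \<or> T = C \<or> T = S - C"
    proof (cases "T \<inter> S = {}")
      case True
      then show ?thesis
        using T agree S by (auto simp: is_cycle_iff_minimal)
    next
      case False
      then have "T \<subseteq> S" using cycle_inside_or_disjoint[OF T gS] by blast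
      then show ?thesis
        using cycles_overlap_eq[OF T C(1)] cycles_overlap_eq[OF T rest] T
        by (auto simp: is_cycle_iff_minimal)
    qed
  next
    assume "(is_cycle f T \<and> T \<noteq> S) \<or> T = C \<or> T = S - C"
    then show "is_cycle g T"
    proof (elim disjE conjE)
      assume "is_cycle f T" "T \<noteq> S"
      then have "T \<inter> S = {}" using cycles_overlap_eq[OF _ S] by blast
      then show "is_cycle g T" using agree \<open>is_cycle f T\<close> by blast
    qed (use C rest in simp_all)
  qed
qed

lemma cycle_count_after_split:
  assumes cycles: "\<And>T. is_cycle g T \<longleftrightarrow> (is_cycle f T \<and> T \<noteq> S) \<or> T = C \<or> T = S'"
    and "infinite S" "infinite S'" "finite C" "card C = n" "\<not> is_cycle f C"
  shows "cycle_count g n = cycle_count f n + 1"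
    and "m \<noteq> n \<Longrightarrow> cycle_count g m = cycle_count f m"
proof -
  let ?cyc = "\<lambda>h m. {T. is_cycle h T \<and> finite T \<and> card T = m}"
  have sets: "?cyc g m = ?cyc f m \<union> (if m = n then {C} else {})" for m
    using cycles assms(2-5) by auto
  show "m \<noteq> n \<Longrightarrow> cycle_count g m = cycle_count f m"
    using sets[of m] by (simp add: cycle_count_def)
  have "?cyc g n = insert C (?cyc f n)" "C \<notin> ?cyc f n"
    using sets[of n] assms(6) by auto
  then show "cycle_count g n = cycle_count f n + 1"
    by (simp add: cycle_count_def Let_def eSuc_enat[symmetric] eSuc_plus_1)
qed

lemma transpose_comp_orbit:
  assumes inj_orb: "inj (\<lambda>k. (f ^^ k) x)" and "n \<ge> 1"
  defines "g \<equiv> transpose x ((f ^^ n) x) \<circ> f"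
  shows "k < n \<Longrightarrow> (g ^^ k) x = (f ^^ k) x" and "(g ^^ n) x = x"
proof -
  have distinct: "(f ^^ i) x = (f ^^ j) x \<longleftrightarrow> i = j" for i j
    using inj_orb by (auto dest: injD)
  show same: "(g ^^ k) x = (f ^^ k) x" if "k < n" for k
    using that
  proof (induction k)
    case (Suc k)
    then show ?case
      using distinct[of "Suc k" 0] distinct[of "Suc k" n] by (simp add: g_def transpose_def)
  qed simp
  obtain m where m: "n = Suc m" using \<open>n \<ge> 1\<close> by (cases n) auto
  have "(g ^^ n) x = g ((f ^^ m) x)"
    using same[of m] m by simp
  also have "\<dots> = transpose x ((f ^^ n) x) ((f ^^ n) x)"
    by (simp add: g_def m)
  finally show "(g ^^ n) x = x" by simp
qed

text \<open>The rest S - C of the split cycle is again a single cycle: a proper invariant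
  part of it could be chosen to avoid both transposed points, and would then be
  f-invariant, contradicting minimality of S.\<close>

lemma split_rest_is_cycle:
  assumes S: "is_cycle f S"
    and g: "g = transpose a b \<circ> f"
    and gS: "invariant g S" and gC: "invariant g C" and "C \<subseteq> S"
    and "a \<in> C" "b \<in> S - C"
  shows "is_cycle g (S - C)"
proof -
  have gR: "invariant g (S - C)" using gS gC by (rule invariant_Diff)
  have "T = S - C" if T: "invariant g T" "T \<subseteq> S - C" "T \<noteq> {}" for T
  proof (rule ccontr)
    assume "T \<noteq> S - C"
    define U where "U = (if b \<in> T then (S - C) - T else T)"
    have U: "invariant g U" "U \<subseteq> S - C" "U \<noteq> {}" "b \<notin> U"
      using T \<open>T \<noteq> S - C\<close> gR invariant_Diff unfolding U_def by auto
    then have "invariant f U"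
      using invariant_transpose_comp_avoiding[of a b f U] g \<open>a \<in> C\<close> by blast
    then show False
      using cycle_inside_or_disjoint[OF S] U(2,3) \<open>a \<in> C\<close> \<open>C \<subseteq> S\<close> by blast
  qed
  then show ?thesis
    using gR \<open>b \<in> S - C\<close> by (auto simp: is_cycle_iff_minimal)
qed

lemma transpose_cuts_infinite_cycle:
  assumes inj: "inj f" and S: "is_cycle f S" "infinite S" and "x \<in> S" and "n \<ge> 1"
  defines "g \<equiv> transpose x ((f ^^ n) x) \<circ> f"
    and "C \<equiv> (\<lambda>k. (f ^^ k) x) ` {..<n}"
  shows "is_cycle g C" "is_cycle g (S - C)" "finite C" "card C = n" "C \<subseteq> S"
    and "invariant g S" "\<And>y. y \<notin> S \<Longrightarrow> g y = f y" "x \<noteq> (f ^^ n) x"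
proof -
  define b where "b = (f ^^ n) x"
  have g: "g = transpose x b \<circ> f" by (simp add: g_def b_def)
  have inj_orb: "inj (\<lambda>k. (f ^^ k) x)"
    using infinite_cycle_orbit_inj[OF inj S \<open>x \<in> S\<close>] .
  have fS: "invariant f S" using S(1) by (simp add: is_cycle_iff_minimal)
  have orbit_in_S: "(f ^^ k) x \<in> S" for k
    by (induction k) (use \<open>x \<in> S\<close> fS in \<open>auto simp: invariant_def\<close>)
  show "finite C" "C \<subseteq> S" using orbit_in_S by (auto simp: C_def)
  show "card C = n" using inj_orb by (simp add: C_def card_image inj_on_subset)
  have "x \<in> C" unfolding C_def using \<open>n \<ge> 1\<close> by (intro image_eqI[of _ _ 0]) auto
  have "b \<in> S - C" using inj_orb orbit_in_S by (auto simp: C_def b_def dest: injD)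
  then show "x \<noteq> (f ^^ n) x" unfolding b_def[symmetric] using \<open>x \<in> C\<close> by blast
  have inj_g: "inj g"
    unfolding g_def using inj by (simp add: inj_compose inj_transpose)
  have "C = (\<lambda>k. (g ^^ k) x) ` {..<n}"
    using transpose_comp_orbit(1)[OF inj_orb \<open>n \<ge> 1\<close>] by (simp add: C_def g_def b_def)
  then show C: "is_cycle g C"
    using periodic_orbit_is_cycle[OF inj_g] transpose_comp_orbit(2)[OF inj_orb \<open>n \<ge> 1\<close>]
      \<open>n \<ge> 1\<close> by (simp add: g_def b_def)
  show gS: "invariant g S"
    using invariant_transpose_comp[OF fS \<open>x \<in> S\<close>] \<open>b \<in> S - C\<close> by (simp add: g)
  show "\<And>y. y \<notin> S \<Longrightarrow> g y = f y"
    using transpose_comp_outside[OF fS \<open>x \<in> S\<close>] \<open>b \<in> S - C\<close> by (simp add: g)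
  show "is_cycle g (S - C)"
    using split_rest_is_cycle[OF S(1) g gS _ \<open>C \<subseteq> S\<close> \<open>x \<in> C\<close> \<open>b \<in> S - C\<close>] C
    by (simp add: is_cycle_iff_minimal)
qed

theorem mainTheorem9:
  fixes f :: "'a \<Rightarrow> 'a" and n :: nat
  assumes "countable (UNIV :: 'a set)" and "infinite (UNIV :: 'a set)"
    and "inj f"
    and "\<exists>S. is_cycle f S \<and> infinite S"
    and "n \<ge> 1"
  shows "\<exists>a b. a \<noteq> b \<and>
           cycle_count (transpose a b \<circ> f) n = cycle_count f n + 1 \<and>
           (\<forall>m. m \<ge> 1 \<and> m \<noteq> n \<longrightarrow>
                 cycle_count (transpose a b \<circ> f) m = cycle_count f m)"
proof -
  obtain S x where S: "is_cycle f S" "infinite S" and "x \<in> S"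
    using assms(4) by (auto simp: is_cycle_def)
  define b where "b = (f ^^ n) x"
  define C where "C = (\<lambda>k. (f ^^ k) x) ` {..<n}"
  note cut = transpose_cuts_infinite_cycle[OF assms(3) S \<open>x \<in> S\<close> assms(5),
      folded b_def C_def]
  have "\<not> is_cycle f C"
  proof
    \<comment> \<open>a cycle of f meeting S is S itself, but C is finite and S is not\<close>
    assume "is_cycle f C"
    moreover have "C \<noteq> {}" using cut(1) by (simp add: is_cycle_def)
    then have "C \<inter> S \<noteq> {}" using cut(5) by blast
    ultimately have "C = S" by (rule cycles_overlap_eq[OF _ S(1)])
    then show False using cut(3) S(2) by simp
  qed
  moreover have "infinite (S - C)" using S(2) cut(3) by simp
  ultimately have "cycle_count (transpose x b \<circ> f) n = cycle_count f n + 1"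
    "\<And>m. m \<noteq> n \<Longrightarrow> cycle_count (transpose x b \<circ> f) m = cycle_count f m"
    using cycle_count_after_split[OF cycles_after_split[OF S(1) cut(6,7,1,5,2)] S(2) _ cut(3,4)]
    by simp_all
  then show ?thesis using cut(8) by blast
qed

end
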